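(* Let $\mathbb{F}\in\{\mathbb{R},\mathbb{C}\}$ and let $X$ be a Banach algebra over $\mathbb{F}$ with unit element $\mathbf{1}$. Let $h:X\to X$ and $\phi,\psi:X^2\to[0,\infty)$ satisfy $$\|h(xyx)-h(x)yx-xh(y)x-xyh(x)\|\le\psi(x,y),$$ $$\|h(\lambda a x+by)-\lambda A h(x)-Bh(y)\|\le\phi(x,y)$$ for all $x,y\in X$ and all $\lambda\in\Lambda$, where $a,b,A,B\in\mathbb{F}$ are fixed with $ab\neq0$ and $\Lambda\subseteq\mathbb{F}$ is nonempty. Assume there is $\xi\in\Lambda\setminus\{0\}$ such that $d:=\xi A+B=\xi a+b$ satisfies $d\neq 0$ and $d\neq 1$, and that for all $x,y\in X$: $$\Phi(x):=\sum_{k=0}^{\infty}|d|^{-k-1}\phi(d^kx,d^kx)<\infty,\qquad \liminf_{k\to\infty}|d|^{-k}\phi(d^kx,d^ky)=0,$$ $$\liminf_{k\to\infty}|d|^{-3k}\psi(d^kx,d^ky)=0,\qquad \liminf_{k\to\infty}|d|^{-2k}\psi(d^kx,y)=0.$$ Then $h$ is a Jordan triple derivation. Furthermore, if $\Lambda$ has a bounded subset $\Lambda_0$ with $\Lambda_0\in\mathcal{B}_{\mathbb{F}}$, then $h$ is a linear Jordan triple derivation.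
   Context: A Jordan triple derivation on an algebra $X$ is an additive map $D:X\to X$ with $D(xyx)=D(x)yx+xD(y)x+xyD(x)$ for all $x,y\in X$; it is linear if moreover $D(\lambda x)=\lambda D(x)$ for all scalars $\lambda$ and $x\in X$. $\mathcal{B}_{\mathbb{F}}$ denotes the family of all sets $\Lambda\subseteq\mathbb{F}$ such that every additive function $f:\mathbb{F}\to X$ which is bounded on $\Lambda$ is continuous. *)

theory Defs
  imports "HOL-Analysis.Analysis"
begin

definition R_or_C :: "'f::real_normed_field itself \<Rightarrow> bool" where
  "R_or_C _ \<longleftrightarrow>
     (\<exists>\<phi>::real \<Rightarrow> 'f. bij \<phi> \<and> (\<forall>x y. \<phi> (x + y) = \<phi> x + \<phi> y \<and> \<phi> (x * y) = \<phi> x * \<phi> y)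
        \<and> (\<forall>x. norm (\<phi> x) = norm x)) \<or>
     (\<exists>\<phi>::complex \<Rightarrow> 'f. bij \<phi> \<and> (\<forall>x y. \<phi> (x + y) = \<phi> x + \<phi> y \<and> \<phi> (x * y) = \<phi> x * \<phi> y)
        \<and> (\<forall>x. norm (\<phi> x) = norm x))"

text \<open>sm is a scalar multiplication by 'f making the unital real Banach algebra 'a
  a unital Banach algebra over 'f (compatible with the real scaling).\<close>
definition banach_algebra_over ::
  "('f::real_normed_field \<Rightarrow> 'a::{real_normed_algebra_1,banach} \<Rightarrow> 'a) \<Rightarrow> bool" where
  "banach_algebra_over sm \<longleftrightarrow>
     (\<forall>c e x. sm (c + e) x = sm c x + sm e x) \<and>
     (\<forall>c x y. sm c (x + y) = sm c x + sm c y) \<and>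
     (\<forall>c e x. sm (c * e) x = sm c (sm e x)) \<and>
     (\<forall>x. sm 1 x = x) \<and>
     (\<forall>r x. sm (of_real r) x = scaleR r x) \<and>
     (\<forall>c x. norm (sm c x) = norm c * norm x) \<and>
     (\<forall>c x y. sm c (x * y) = sm c x * y \<and> sm c (x * y) = x * sm c y)"

definition jordan_triple_derivation :: "('a::ring \<Rightarrow> 'a) \<Rightarrow> bool" where
  "jordan_triple_derivation D \<longleftrightarrow>
     (\<forall>x y. D (x + y) = D x + D y) \<and>
     (\<forall>x y. D (x * y * x) = D x * y * x + x * D y * x + x * y * D x)"

definition linear_jordan_triple_derivation ::
  "('f \<Rightarrow> 'a \<Rightarrow> 'a) \<Rightarrow> ('a::ring \<Rightarrow> 'a) \<Rightarrow> bool" where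
  "linear_jordan_triple_derivation sm D \<longleftrightarrow>
     jordan_triple_derivation D \<and> (\<forall>c x. D (sm c x) = sm c (D x))"

definition B_F :: "'a::real_normed_vector itself \<Rightarrow> 'f::real_normed_field set set" where
  "B_F _ = {\<Lambda>. \<forall>f::'f \<Rightarrow> 'a. (\<forall>s t. f (s + t) = f s + f t) \<and> bounded (f ` \<Lambda>)
                   \<longrightarrow> continuous_on UNIV f}"

end

theory Submission
  imports Defs
begin

text \<open>Hyers' direct method: the estimate for h(d z) - d h(z) makes
  T x = lim d^(-n) h(d^n x) exist, and T satisfies the linear equation exactly. Rescaling only x
  in the Jordan estimate gives T(x y x) = T x y x + x h(y) x + x y T x, while rescaling both
  variables gives T 1 = 0; at x = 1 the first identity therefore reads T = h. Hence h satisfies the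
  linear equation exactly, which makes it additive because d \<noteq> 1, and it is a Jordan triple
  derivation. For linearity, boundedness of t \<mapsto> h(t x) on \<Lambda>0 makes this additive map
  continuous, so h is real homogeneous; homogeneity under a square root j of -1 holds for every
  Jordan triple derivation, since (1 + j) x (1 + j) = 2 j x.\<close>

lemma LIMSEQ_zero_if_norm_le_liminf_zero:
  fixes w :: "nat \<Rightarrow> 'b::real_normed_vector"
  assumes "w \<longlonglongrightarrow> W" "\<And>k. norm (w k) \<le> e k" "liminf (\<lambda>k. ereal (e k)) = 0"
  shows "W = 0"
proof -
  have "(\<lambda>k. ereal (norm (w k))) \<longlonglongrightarrow> ereal (norm W)"
    using assms(1) by (intro tendsto_ereal tendsto_norm)
  hence "liminf (\<lambda>k. ereal (norm (w k))) = ereal (norm W)"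
    by (simp add: lim_imp_Liminf)
  moreover have "liminf (\<lambda>k. ereal (norm (w k))) \<le> liminf (\<lambda>k. ereal (e k))"
    by (intro Liminf_mono) (use assms(2) in auto)
  ultimately have "norm W \<le> 0" using assms(3) by simp
  thus ?thesis by simp
qed

lemma additive_continuous_real_eq_scaleR:
  fixes g :: "real \<Rightarrow> 'b::real_normed_vector"
  assumes add: "\<And>s t. g (s + t) = g s + g t" and cont: "continuous_on UNIV g"
  shows "g r = r *\<^sub>R g 1"
proof -
  interpret additive g by unfold_locales (rule add)
  have gnat: "g (real n * s) = real n *\<^sub>R g s" for n s
    by (induction n) (auto simp: zero add distrib_right scaleR_add_left)
  have gint: "g (of_int m * s) = of_int m *\<^sub>R g s" for m s
  proof (cases "m \<ge> 0")
    case True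
    then obtain n where "m = int n" using nonneg_int_cases by blast
    thus ?thesis using gnat by simp
  next
    case False
    then obtain n where "m = - int n" using nonpos_int_cases by (metis linorder_linear)
    thus ?thesis using gnat[of n s] minus[of "real n * s"] by simp
  qed
  have grat: "g q = q *\<^sub>R g 1" if "q \<in> \<rat>" for q
  proof -
    from that obtain m n where q: "q = of_int m / of_int n" and n: "n \<noteq> 0"
      by (auto elim!: Rats_cases')
    have "of_int n *\<^sub>R g q = g (of_int n * q)" using gint by simp
    also have "of_int n * q = of_int m * 1" using n q by simp
    also have "g \<dots> = of_int m *\<^sub>R g 1" by (rule gint)
    finally have e: "of_int n *\<^sub>R g q = of_int m *\<^sub>R g 1" .
    have "g q = inverse (of_int n) *\<^sub>R (of_int n *\<^sub>R g q)"
      using n by (simp only: scaleR_scaleR) simp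
    also have "\<dots> = (of_int m / of_int n) *\<^sub>R g 1"
      unfolding e scaleR_scaleR by (simp only: divide_inverse_commute)
    finally show ?thesis using q by simp
  qed
  have "closed {r. g r = r *\<^sub>R g 1}"
    by (rule closed_Collect_eq[OF cont]) (intro continuous_on_scaleR continuous_on_id continuous_on_const)
  moreover have "\<rat> \<subseteq> {r. g r = r *\<^sub>R g 1}" using grat by blast
  ultimately have "closure \<rat> \<subseteq> {r. g r = r *\<^sub>R g 1}" by (intro closure_minimal) auto
  thus ?thesis by (auto simp: Rats_closure_real)
qed

lemma norm_preserving_real_hom_eq_of_real:
  fixes \<phi> :: "real \<Rightarrow> 'f::real_normed_field"
  assumes add: "\<And>x y. \<phi> (x + y) = \<phi> x + \<phi> y" and mult: "\<And>x y. \<phi> (x * y) = \<phi> x * \<phi> y"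
    and norm: "\<And>x. norm (\<phi> x) = norm x"
  shows "\<phi> r = of_real r"
proof -
  interpret additive \<phi> by unfold_locales (rule add)
  have "isCont \<phi> x" for x
    unfolding isCont_def LIM_eq by (metis dist_norm diff norm)
  hence "continuous_on UNIV \<phi>" by (simp add: continuous_at_imp_continuous_on)
  hence "\<phi> r = r *\<^sub>R \<phi> 1" by (rule additive_continuous_real_eq_scaleR[OF add])
  moreover have "\<phi> 1 = 1"
    using mult[of 1 1] norm[of 1] by (metis mult_cancel_left1 norm_one norm_zero one_neq_zero)
  ultimately show ?thesis by (simp add: scaleR_conv_of_real)
qed

lemma R_or_C_cases:
  fixes c :: "'f::real_normed_field"
  assumes "R_or_C TYPE('f)"
  obtains r where "c = of_real r"
  | j r s where "j * j = -1" "c = of_real r + j * of_real s"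
  using assms unfolding R_or_C_def
proof (elim disjE exE conjE)
  fix \<phi> :: "real \<Rightarrow> 'f"
  assume "bij \<phi>" "\<forall>x y. \<phi> (x + y) = \<phi> x + \<phi> y \<and> \<phi> (x * y) = \<phi> x * \<phi> y"
    "\<forall>x. norm (\<phi> x) = norm x"
  moreover obtain r where "c = \<phi> r" using \<open>bij \<phi>\<close> by (metis bij_pointE)
  ultimately have "c = of_real r" using norm_preserving_real_hom_eq_of_real[of \<phi>] by metis
  thus thesis by (rule that(1))
next
  fix \<phi> :: "complex \<Rightarrow> 'f"
  assume bij: "bij \<phi>"
    and hom: "\<forall>x y. \<phi> (x + y) = \<phi> x + \<phi> y \<and> \<phi> (x * y) = \<phi> x * \<phi> y"
    and norm: "\<forall>x. norm (\<phi> x) = norm x"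
  have of_real: "\<phi> (complex_of_real r) = of_real r" for r
    using hom norm by (intro norm_preserving_real_hom_eq_of_real[of "\<lambda>r. \<phi> (complex_of_real r)"]) auto
  have "\<phi> \<i> * \<phi> \<i> = \<phi> (complex_of_real (-1))"
    using hom by (metis complex_i_mult_minus i_squared of_real_1 of_real_minus)
  hence "\<phi> \<i> * \<phi> \<i> = -1" using of_real[of "-1"] by simp
  moreover obtain z where "c = \<phi> z" using bij by (metis bij_pointE)
  hence "c = of_real (Re z) + \<phi> \<i> * of_real (Im z)"
    using hom of_real complex_eq[of z] by metis
  ultimately show thesis by (rule that(2))
qed

lemma jordan_triple_derivation_one:
  fixes D :: "'a::real_algebra_1 \<Rightarrow> 'a"
  assumes "jordan_triple_derivation D"
  shows "D 1 = 0"
proof -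
  have "D (1 * 1 * 1) = D 1 * 1 * 1 + 1 * D 1 * 1 + 1 * 1 * D 1"
    using assms unfolding jordan_triple_derivation_def by blast
  hence "D 1 = D 1 + D 1 + D 1" by simp
  hence "2 *\<^sub>R D 1 = 0" by (simp add: scaleR_2)
  thus ?thesis by simp
qed

locale scalar_banach_algebra =
  fixes sm :: "'f::real_normed_field \<Rightarrow> 'a::{real_normed_algebra_1,banach} \<Rightarrow> 'a"
  assumes banach_algebra_over: "banach_algebra_over sm"
begin

lemma scale_add_left: "sm (c + e) x = sm c x + sm e x"
  and scale_add_right: "sm c (x + y) = sm c x + sm c y"
  and scale_scale: "sm c (sm e x) = sm (c * e) x"
  and scale_one: "sm 1 x = x"
  and scale_of_real: "sm (of_real r) x = r *\<^sub>R x"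
  and norm_scale: "norm (sm c x) = norm c * norm x"
  and scale_mult_left: "sm c x * y = sm c (x * y)"
  and scale_mult_right: "x * sm c y = sm c (x * y)"
  using banach_algebra_over unfolding banach_algebra_over_def by metis+

interpretation scale: bounded_linear "sm c"
proof (rule bounded_linear_intro)
  show "sm c (r *\<^sub>R x) = r *\<^sub>R sm c x" for r x
    by (metis scale_of_real scale_scale mult.commute)
  show "norm (sm c x) \<le> norm x * norm c" for x
    by (simp add: norm_scale mult.commute)
qed (rule scale_add_right)

lemma scale_zero_right: "sm c 0 = 0"
  and scale_diff_right: "sm c (x - y) = sm c x - sm c y"
  by (simp_all add: scale.zero scale.diff)

lemma scale_commute: "sm c (sm e x) = sm e (sm c x)"
  by (simp add: scale_scale mult.commute)

lemma tendsto_scale: "X \<longlonglongrightarrow> L \<Longrightarrow> (\<lambda>n. sm c (X n)) \<longlonglongrightarrow> sm c L"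
  by (rule scale.tendsto)

lemma scale_cancel_inverse: "c \<noteq> 0 \<Longrightarrow> sm c (sm (inverse c) x) = x"
  by (simp add: scale_scale scale_one)

lemma scale_eq_self_iff: "sm c x = x \<longleftrightarrow> c = 1 \<or> x = 0"
proof -
  have "sm c x - x = sm (c - 1) x"
    using scale_add_left[of "c - 1" 1 x] by (simp add: scale_one)
  thus ?thesis by (metis eq_iff_diff_eq_0 norm_eq_zero norm_scale mult_eq_0_iff)
qed

lemma norm_scale_inverse_power: "norm (sm (inverse d ^ n) x) = norm x / norm d ^ n"
  by (simp add: norm_scale norm_power norm_inverse power_inverse divide_inverse_commute)

lemma scale_inverse_power_cancel:
  assumes "d \<noteq> 0" "n \<le> m"
  shows "sm (inverse d ^ m) (sm (d ^ n) x) = sm (inverse d ^ (m - n)) x"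
proof -
  have "inverse d ^ m * d ^ n = inverse d ^ (m - n)"
    using assms by (simp add: power_diff power_inverse field_simps)
  thus ?thesis by (simp add: scale_scale)
qed

definition rescaled :: "'f \<Rightarrow> ('a \<Rightarrow> 'a) \<Rightarrow> nat \<Rightarrow> 'a \<Rightarrow> 'a" where
  "rescaled d h n x = sm (inverse d ^ n) (h (sm (d ^ n) x))"

lemma convergent_rescaled:
  assumes d: "d \<noteq> 0"
    and step: "\<And>z. norm (h (sm d z) - sm d (h z)) \<le> \<Phi> z"
    and summable: "summable (\<lambda>k. \<Phi> (sm (d ^ k) x) / norm d ^ Suc k)"
  shows "convergent (\<lambda>n. rescaled d h n x)"
proof -
  define \<delta> where "\<delta> k = rescaled d h (Suc k) x - rescaled d h k x" for k
  have cancel: "sm (inverse d ^ Suc k) (sm d v) = sm (inverse d ^ k) v" for k v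
    using d by (simp add: scale_scale field_simps)
  have \<delta>_eq: "\<delta> k = sm (inverse d ^ Suc k) (h (sm d (sm (d ^ k) x)) - sm d (h (sm (d ^ k) x)))" for k
    unfolding \<delta>_def rescaled_def scale_diff_right cancel by (simp add: scale_scale)
  have "norm (\<delta> k) \<le> \<Phi> (sm (d ^ k) x) / norm d ^ Suc k" for k
    unfolding \<delta>_eq norm_scale_inverse_power using step by (rule divide_right_mono) simp
  hence "summable \<delta>"
    by (rule summable_comparison_test'[OF summable])
  hence "(\<lambda>n. rescaled d h 0 x + (\<Sum>k<n. \<delta> k)) \<longlonglongrightarrow> rescaled d h 0 x + suminf \<delta>"
    by (intro tendsto_add tendsto_const summable_LIMSEQ)
  moreover have "rescaled d h 0 x + (\<Sum>k<n. \<delta> k) = rescaled d h n x" for n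
    unfolding \<delta>_def using sum_lessThan_telescope[of "\<lambda>k. rescaled d h k x" n] by simp
  ultimately show ?thesis by (auto simp: convergent_def)
qed

lemma rescaled_limit_linear_eq:
  assumes d: "d \<noteq> 0"
    and lim: "\<And>x. (\<lambda>n. rescaled d h n x) \<longlonglongrightarrow> T x"
    and approx: "\<And>z w. norm (h (sm c z + sm e w) - sm C (h z) - sm E (h w)) \<le> \<phi> z w"
    and small: "liminf (\<lambda>k. ereal (\<phi> (sm (d ^ k) z) (sm (d ^ k) w) / norm d ^ k)) = 0"
  shows "T (sm c z + sm e w) = sm C (T z) + sm E (T w)"
proof -
  define z' w' where "z' k = sm (d ^ k) z" and "w' k = sm (d ^ k) w" for k
  define defect where "defect k = sm (inverse d ^ k) (h (sm c (z' k) + sm e (w' k))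
      - sm C (h (z' k)) - sm E (h (w' k)))" for k
  have "defect = (\<lambda>k. rescaled d h k (sm c z + sm e w) - sm C (rescaled d h k z)
      - sm E (rescaled d h k w))"
    by (simp add: fun_eq_iff defect_def z'_def w'_def rescaled_def scale_add_right
        scale_diff_right scale_commute)
  hence "defect \<longlonglongrightarrow> T (sm c z + sm e w) - sm C (T z) - sm E (T w)"
    by (simp add: tendsto_diff tendsto_scale lim)
  moreover have "norm (defect k) \<le> \<phi> (z' k) (w' k) / norm d ^ k" for k
    unfolding defect_def norm_scale_inverse_power using approx by (rule divide_right_mono) simp
  ultimately have "T (sm c z + sm e w) - sm C (T z) - sm E (T w) = 0"
    using small unfolding z'_def w'_def by (rule LIMSEQ_zero_if_norm_le_liminf_zero)
  thus ?thesis by (simp add: diff_diff_eq)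
qed

lemma rescaled_limit_jordan_eq:
  assumes d: "d \<noteq> 0"
    and lim: "\<And>x. (\<lambda>n. rescaled d h n x) \<longlonglongrightarrow> T x"
    and approx: "\<And>x y. norm (h (x * y * x) - h x * y * x - x * h y * x - x * y * h x) \<le> \<psi> x y"
    and small: "liminf (\<lambda>k. ereal (\<psi> (sm (d ^ k) x) y / norm d ^ (2 * k))) = 0"
  shows "T (x * y * x) = T x * y * x + x * h y * x + x * y * T x"
proof -
  define x' where "x' k = sm (d ^ k) x" for k
  define defect where "defect k = sm (inverse d ^ (2 * k))
      (h (x' k * y * x' k) - h (x' k) * y * x' k - x' k * h y * x' k - x' k * y * h (x' k))" for k
  have twice: "sm (d ^ k) (sm (d ^ k) v) = sm (d ^ (2 * k)) v" for k v
    by (simp add: scale_scale mult_2 power_add)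
  have "defect = (\<lambda>k. rescaled d h (2 * k) (x * y * x) - rescaled d h k x * y * x
      - x * h y * x - x * y * rescaled d h k x)"
    using d by (simp add: fun_eq_iff defect_def x'_def rescaled_def scale_diff_right scale_one
        scale_mult_left scale_mult_right twice scale_inverse_power_cancel)
  moreover have "(\<lambda>k. rescaled d h (2 * k) v) \<longlonglongrightarrow> T v" for v
    using filterlim_compose[OF lim mult_nat_left_at_top] by simp
  ultimately have "defect \<longlonglongrightarrow> T (x * y * x) - T x * y * x - x * h y * x - x * y * T x"
    by (simp add: tendsto_diff tendsto_mult tendsto_const lim)
  moreover have "norm (defect k) \<le> \<psi> (x' k) y / norm d ^ (2 * k)" for k
    unfolding defect_def norm_scale_inverse_power using approx by (rule divide_right_mono) simp
  ultimately have "T (x * y * x) - T x * y * x - x * h y * x - x * y * T x = 0"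
    using small unfolding x'_def by (rule LIMSEQ_zero_if_norm_le_liminf_zero)
  thus ?thesis by (simp add: diff_diff_eq)
qed

lemma rescaled_limit_one:
  assumes d: "d \<noteq> 0"
    and lim: "\<And>x. (\<lambda>n. rescaled d h n x) \<longlonglongrightarrow> T x"
    and approx: "\<And>x y. norm (h (x * y * x) - h x * y * x - x * h y * x - x * y * h x) \<le> \<psi> x y"
    and small: "liminf (\<lambda>k. ereal (\<psi> (sm (d ^ k) 1) (sm (d ^ k) 1) / norm d ^ (3 * k))) = 0"
  shows "T 1 = 0"
proof -
  define u where "u k = sm (d ^ k) (1::'a)" for k
  define defect where "defect k = sm (inverse d ^ (3 * k))
      (h (u k * u k * u k) - h (u k) * u k * u k - u k * h (u k) * u k - u k * u k * h (u k))" for k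
  have twice: "sm (d ^ k) (sm (d ^ k) v) = sm (d ^ (2 * k)) v"
    and thrice: "sm (d ^ k) (sm (d ^ (2 * k)) v) = sm (d ^ (3 * k)) v" for k v
    by (simp_all add: scale_scale numeral_3_eq_3 mult_2 power_add)
  have defect_eq: "defect =
      (\<lambda>k. rescaled d h (3 * k) 1 - rescaled d h k 1 - rescaled d h k 1 - rescaled d h k 1)"
    using d by (simp add: fun_eq_iff defect_def u_def rescaled_def scale_diff_right scale_one
        scale_mult_left scale_mult_right twice thrice scale_inverse_power_cancel)
  have "(\<lambda>k. rescaled d h (3 * k) 1) \<longlonglongrightarrow> T 1"
    using filterlim_compose[OF lim mult_nat_left_at_top] by simp
  hence "defect \<longlonglongrightarrow> T 1 - T 1 - T 1 - T 1"
    unfolding defect_eq by (intro tendsto_diff lim)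
  moreover have "norm (defect k) \<le> \<psi> (u k) (u k) / norm d ^ (3 * k)" for k
    unfolding defect_def norm_scale_inverse_power using approx by (rule divide_right_mono) simp
  ultimately have "T 1 - T 1 - T 1 - T 1 = 0"
    using small unfolding u_def by (rule LIMSEQ_zero_if_norm_le_liminf_zero)
  hence "2 *\<^sub>R T 1 = 0"
    by (simp add: scaleR_2) (metis add.inverse_inverse eq_neg_iff_add_eq_0)
  thus ?thesis by simp
qed

lemma additive_if_linear_eq:
  assumes eq: "\<And>z w. h (sm c z + sm e w) = sm C (h z) + sm E (h w)"
    and c: "c \<noteq> 0" and e: "e \<noteq> 0" and "C + E = c + e" "c + e \<noteq> 1"
  shows "h (x + y) = h x + h y"
proof -
  have "sm (C + E) (h 0) = h 0"
    using eq[of 0 0] by (simp add: scale_zero_right scale_add_left)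
  hence h0: "h 0 = 0"
    using assms(4,5) by (simp add: scale_eq_self_iff)
  have "h (x + y) = h (sm c (sm (inverse c) x) + sm e (sm (inverse e) y))"
    using c e by (simp add: scale_cancel_inverse)
  also have "\<dots> = sm C (h (sm (inverse c) x)) + sm E (h (sm (inverse e) y))"
    by (rule eq)
  also have "\<dots> = h x + h y"
    using eq[of "sm (inverse c) x" 0] eq[of 0 "sm (inverse e) y"] c e
    by (simp add: h0 scale_zero_right scale_cancel_inverse)
  finally show ?thesis .
qed

lemma jordan_triple_derivation_scale_imaginary:
  assumes D: "jordan_triple_derivation D" and j: "j * j = -1"
  shows "D (sm j x) = sm j (D x)"
proof -
  have add: "D (x + y) = D x + D y"
    and triple: "D (x * y * x) = D x * y * x + x * D y * x + x * y * D x" for x y using D unfolding jordan_triple_derivation_def by blast+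
  have D1: "D 1 = 0" by (rule jordan_triple_derivation_one[OF D])
  interpret additive D by unfold_locales (rule add)
  define J where "J = sm j (1::'a)"
  have JL: "J * v = sm j v" and JR: "v * J = sm j v" for v
    by (simp_all add: J_def scale_mult_left scale_mult_right)
  have jj: "sm j (sm j v) = - v" for v
    using scale_of_real[of "-1" v] by (simp add: scale_scale j)
  have "J * 1 * J = - 1" by (simp only: mult_1_right JR) (simp add: J_def jj)
  hence "sm j (D J + D J) = 0"
    using triple[of J 1] by (simp add: minus D1 JL JR scale_add_right scale_zero_right)
  hence "2 *\<^sub>R D J = 0"
    using j norm_scale[of j "D J + D J"] by (auto simp: scaleR_2)
  hence DJ: "D J = 0" by simp
  have "(1 + J) * v * (1 + J) = sm j v + sm j v" for v
    by (simp add: distrib_left distrib_right JL JR jj scale_add_right)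
  hence "D (sm j x + sm j x) = sm j (D x) + sm j (D x)"
    using triple[of "1 + J" x] by (simp add: add D1 DJ)
  hence "2 *\<^sub>R D (sm j x) = 2 *\<^sub>R sm j (D x)"
    by (simp add: add scaleR_2)
  thus ?thesis by simp
qed

lemma bounded_image_if_homogeneous_on:
  assumes hom: "\<And>l z. l \<in> \<Lambda> \<Longrightarrow> D (sm (l * a) z) = sm (l * A) (D z)"
    and a: "a \<noteq> 0" and "bounded \<Lambda>"
  shows "bounded ((\<lambda>t. D (sm t x)) ` \<Lambda>)"
proof -
  obtain M where M: "\<And>l. l \<in> \<Lambda> \<Longrightarrow> norm l \<le> M"
    using \<open>bounded \<Lambda>\<close> by (auto simp: bounded_iff)
  define x' where "x' = sm (inverse a) x"
  have "norm (D (sm l x)) \<le> M * norm A * norm (D x')" if "l \<in> \<Lambda>" for l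
  proof -
    have "D (sm l x) = sm (l * A) (D x')"
      using hom[OF that, of x'] a by (simp add: x'_def scale_scale mult.assoc)
    hence "norm (D (sm l x)) = norm l * (norm A * norm (D x'))"
      by (simp add: norm_scale norm_mult)
    thus ?thesis using M[OF that] by (simp add: mult.assoc mult_right_mono)
  qed
  thus ?thesis unfolding bounded_iff by blast
qed

lemma real_homogeneous_if_bounded_on_B_F:
  fixes D :: "'a \<Rightarrow> 'b::real_normed_vector"
  assumes add: "\<And>x y. D (x + y) = D x + D y"
    and "\<Lambda> \<in> B_F TYPE('b)" and "bounded ((\<lambda>t. D (sm t x)) ` \<Lambda>)"
  shows "D (r *\<^sub>R x) = r *\<^sub>R D x"
proof -
  define f where "f t = D (sm t x)" for t
  have f_add: "f (s + t) = f s + f t" for s t by (simp add: f_def scale_add_left add)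
  moreover have "bounded (f ` \<Lambda>)" using assms(3) by (simp add: f_def)
  ultimately have "continuous_on UNIV f"
    using assms(2) f_add unfolding B_F_def by blast
  hence "continuous_on UNIV (\<lambda>r::real. f (of_real r))"
    by (rule continuous_on_compose2) (auto intro: continuous_intros)
  hence "f (of_real r) = r *\<^sub>R f (of_real 1)"
    by (rule additive_continuous_real_eq_scaleR[rotated]) (simp add: f_add)
  thus ?thesis by (simp add: f_def scale_of_real scale_one)
qed

lemma linear_jordan_triple_derivation_if_real_homogeneous:
  assumes "R_or_C TYPE('f)" and D: "jordan_triple_derivation D"
    and real: "\<And>r x. D (r *\<^sub>R x) = r *\<^sub>R D x"
  shows "linear_jordan_triple_derivation sm D"
  unfolding linear_jordan_triple_derivation_def
proof (intro conjI allI D)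
  have add: "D (x + y) = D x + D y" for x y
    using D unfolding jordan_triple_derivation_def by blast
  fix c x
  from \<open>R_or_C TYPE('f)\<close> show "D (sm c x) = sm c (D x)"
  proof (cases rule: R_or_C_cases[where c = c])
    case (2 j r s)
    thus ?thesis
      using jordan_triple_derivation_scale_imaginary[OF D \<open>j * j = -1\<close>]
      by (simp add: scale_add_left scale_of_real add real flip: scale_scale)
  qed (simp add: scale_of_real real)
qed

lemma linear_jordan_triple_derivation_if_homogeneous_on_B_F:
  assumes "R_or_C TYPE('f)" and D: "jordan_triple_derivation D"
    and hom: "\<And>l z. l \<in> \<Lambda> \<Longrightarrow> D (sm (l * a) z) = sm (l * A) (D z)"
    and "a \<noteq> 0" "bounded \<Lambda>" "\<Lambda> \<in> B_F TYPE('a)"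
  shows "linear_jordan_triple_derivation sm D"
proof -
  have add: "D (x + y) = D x + D y" for x y
    using D unfolding jordan_triple_derivation_def by blast
  have "bounded ((\<lambda>t. D (sm t x)) ` \<Lambda>)" for x
    using hom \<open>a \<noteq> 0\<close> \<open>bounded \<Lambda>\<close> by (rule bounded_image_if_homogeneous_on)
  hence "D (r *\<^sub>R x) = r *\<^sub>R D x" for r x
    using add \<open>\<Lambda> \<in> B_F TYPE('a)\<close> by (intro real_homogeneous_if_bounded_on_B_F)
  thus ?thesis
    using \<open>R_or_C TYPE('f)\<close> D by (intro linear_jordan_triple_derivation_if_real_homogeneous)
qed

end

theorem theorem2p3:
  fixes sm :: "'f::real_normed_field \<Rightarrow> 'a::{real_normed_algebra_1,banach} \<Rightarrow> 'a"
    and h :: "'a \<Rightarrow> 'a"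
    and \<phi> \<psi> :: "'a \<Rightarrow> 'a \<Rightarrow> real"
    and a b A B \<xi> d :: 'f
    and \<Lambda> :: "'f set"
  assumes field: "R_or_C TYPE('f)"
    and alg: "banach_algebra_over sm"
    and phi_nonneg: "\<forall>x y. \<phi> x y \<ge> 0"
    and psi_nonneg: "\<forall>x y. \<psi> x y \<ge> 0"
    and h_psi: "\<forall>x y. norm (h (x * y * x) - h x * y * x - x * h y * x - x * y * h x) \<le> \<psi> x y"
    and h_phi: "\<forall>x y. \<forall>l\<in>\<Lambda>.
                  norm (h (sm (l * a) x + sm b y) - sm (l * A) (h x) - sm B (h y)) \<le> \<phi> x y"
    and ab: "a * b \<noteq> 0"
    and Lne: "\<Lambda> \<noteq> {}"
    and xi: "\<xi> \<in> \<Lambda>" "\<xi> \<noteq> 0"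
    and d_def1: "d = \<xi> * A + B" and d_def2: "d = \<xi> * a + b"
    and d0: "d \<noteq> 0" and d1: "d \<noteq> 1"
    and Phi_fin: "\<forall>x. summable (\<lambda>k. \<phi> (sm (d ^ k) x) (sm (d ^ k) x) / norm d ^ (Suc k))"
    and lim_phi: "\<forall>x y. liminf (\<lambda>k. ereal (\<phi> (sm (d ^ k) x) (sm (d ^ k) y) / norm d ^ k)) = 0"
    and lim_psi3: "\<forall>x y. liminf (\<lambda>k. ereal (\<psi> (sm (d ^ k) x) (sm (d ^ k) y) / norm d ^ (3 * k))) = 0"
    and lim_psi2: "\<forall>x y. liminf (\<lambda>k. ereal (\<psi> (sm (d ^ k) x) y / norm d ^ (2 * k))) = 0"
  shows "jordan_triple_derivation h \<and>
         ((\<exists>\<Lambda>0 \<subseteq> \<Lambda>. bounded \<Lambda>0 \<and> \<Lambda>0 \<in> B_F TYPE('a))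
            \<longrightarrow> linear_jordan_triple_derivation sm h)"
proof -
  interpret scalar_banach_algebra sm by (rule scalar_banach_algebra.intro[OF alg])
  have a: "a \<noteq> 0" and b: "b \<noteq> 0" using ab by auto
  have approx_linear:
      "norm (h (sm (l * a) z + sm b w) - sm (l * A) (h z) - sm B (h w)) \<le> \<phi> z w"
    if "l \<in> \<Lambda>" for l z w
    using h_phi that by blast
  have "sm d z = sm (\<xi> * a) z + sm b z" and "sm d (h z) = sm (\<xi> * A) (h z) + sm B (h z)" for z
    by (simp only: d_def2 scale_add_left, simp only: d_def1 scale_add_left)
  hence step: "norm (h (sm d z) - sm d (h z)) \<le> \<phi> z z" for z
    using approx_linear[OF xi(1), of z z] by (simp add: diff_diff_eq)
  define T where "T x = lim (\<lambda>n. rescaled d h n x)" for x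
  have lim: "(\<lambda>n. rescaled d h n x) \<longlonglongrightarrow> T x" for x
    unfolding T_def convergent_LIMSEQ_iff[symmetric]
    using d0 step Phi_fin[rule_format] by (rule convergent_rescaled[where \<Phi> = "\<lambda>z. \<phi> z z"])
  have approx_jordan:
      "norm (h (x * y * x) - h x * y * x - x * h y * x - x * y * h x) \<le> \<psi> x y" for x y
    using h_psi by blast
  have jordan_T: "T (x * y * x) = T x * y * x + x * h y * x + x * y * T x" for x y
    using d0 lim approx_jordan lim_psi2[rule_format] by (rule rescaled_limit_jordan_eq)
  have "T 1 = 0"
    using d0 lim approx_jordan lim_psi3[rule_format] by (rule rescaled_limit_one)
  hence h_eq_T: "h = T"
    using jordan_T[of 1] by (simp add: fun_eq_iff)
  have linear_eq: "h (sm (l * a) z + sm b w) = sm (l * A) (h z) + sm B (h w)"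
    if "l \<in> \<Lambda>" for l z w
    unfolding h_eq_T using d0 lim approx_linear[OF that] lim_phi[rule_format]
    by (rule rescaled_limit_linear_eq)
  have additive: "h (x + y) = h x + h y" for x y
    by (rule additive_if_linear_eq[OF linear_eq[OF xi(1)]]) (use xi(2) a b d_def1 d_def2 d1 in auto)
  have jordan: "jordan_triple_derivation h"
    unfolding jordan_triple_derivation_def using additive jordan_T h_eq_T by simp
  moreover have "linear_jordan_triple_derivation sm h"
    if "\<Lambda>0 \<subseteq> \<Lambda>" "bounded \<Lambda>0" "\<Lambda>0 \<in> B_F TYPE('a)" for \<Lambda>0
  proof (rule linear_jordan_triple_derivation_if_homogeneous_on_B_F[OF field jordan _ a that(2,3)])
    show "h (sm (l * a) z) = sm (l * A) (h z)" if "l \<in> \<Lambda>0" for l z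
      using linear_eq[of l z 0] additive[of 0 0] \<open>\<Lambda>0 \<subseteq> \<Lambda>\<close> that
      by (auto simp: scale_zero_right)
  qed
  ultimately show ?thesis by blast
qed

end
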